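(* Let $c>0$ be the absolute constant for which, for every $X\sim\mathcal N(0,\sigma^2\mathbf I)$ in $\mathbb R^d$, every fixed $\mathbf y\ne 0$ and every $\delta>0$, $P(|X^\top\mathbf y|\ge\delta)\le\exp(1-\frac{c\delta^2}{\sigma^2\|\mathbf y\|_2^2})$. Let $\mathbf y_i=\mathbf x_i+\mathbf e_i$ for $i=1,2$, where $\mathbf x_i\in\mathbb R^d$ are random with $\|\mathbf x_i\|_2=1$ and $\mathbf e_1,\mathbf e_2\sim\mathcal N(0,\sigma^2\mathbf I)$ are independent of each other and of $\mathbf x_1,\mathbf x_2$. Let $v\in\mathbb R$, $p\in[0,1]$ and $\delta>0$. If $P(\mathbf x_1^\top\mathbf x_2>v)\ge p$, then \[ P(\mathbf y_1^\top\mathbf y_2>v-3\delta)\ge p-\exp\!\Big(1-\frac{c\delta^2}{\sigma^2}\Big)-\frac{d\sigma^4}{2\delta^2}. \] If $P(\mathbf x_1^\top\mathbf x_2<v)\ge p$, then \[ P(\mathbf y_1^\top\mathbf y_2<v+3\delta)\ge p-\exp\!\Big(1-\frac{c\delta^2}{\sigma^2}\Big)-\frac{d\sigma^4}{2\delta^2}. \] *)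

theory Defs
  imports "HOL-Probability.Probability"
begin

definition gauss_density :: "real \<Rightarrow> real^'d \<Rightarrow> real" where
  "gauss_density s x = (\<Prod>j\<in>UNIV. normal_density 0 s (x $ j))"

definition gaussian_vec :: "real \<Rightarrow> (real^'d) measure" where
  "gaussian_vec s = density lborel (\<lambda>x. ennreal (gauss_density s x))"

end

theory Submission
  imports Defs
begin

text \<open>Expand \<open>y\<^sub>1 \<bullet> y\<^sub>2 = x\<^sub>1 \<bullet> x\<^sub>2 + (x\<^sub>1 \<bullet> e\<^sub>2 + e\<^sub>1 \<bullet> x\<^sub>2) + e\<^sub>1 \<bullet> e\<^sub>2\<close>; it suffices that
  both noise terms are small outside events of small probability. Conditionally on the unit
  signals, the cross term \<open>x\<^sub>1 \<bullet> e\<^sub>2 + e\<^sub>1 \<bullet> x\<^sub>2\<close> is a sum of two independent \<open>N(0, \<sigma>\<^sup>2)\<close>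
  variables, hence has the law of \<open>z \<bullet> x\<^sub>1\<close> for \<open>z \<sim> N(0, 2\<sigma>\<^sup>2 I)\<close>, and the assumed tail bound
  at threshold \<open>\<surd>2 \<delta>\<close> gives the exponential term. The product \<open>e\<^sub>1 \<bullet> e\<^sub>2\<close> has second moment
  \<open>d \<sigma>\<^sup>4\<close>, so Chebyshev's inequality at threshold \<open>(3 - \<surd>2) \<delta>\<close>, whose square exceeds \<open>2 \<delta>\<^sup>2\<close>,
  gives the polynomial term. A union bound concludes.\<close>

section \<open>Isotropic Gaussian vectors\<close>

lemma measurable_vec_lambda_PiM [measurable]:
  "(\<lambda>f. \<chi> j. f j) \<in> (\<Pi>\<^sub>M j\<in>(UNIV::'d::finite set). lborel) \<rightarrow>\<^sub>M (borel :: (real^'d) measure)"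
proof (subst borel_measurable_euclidean_space, intro ballI)
  fix i :: "real^'d" assume "i \<in> Basis"
  then obtain k where k: "i = axis k 1" by (auto simp: Basis_vec_def)
  have "(\<lambda>f::'d\<Rightarrow>real. (\<chi> j. f j) \<bullet> i) = (\<lambda>f. f k)" using k by (auto simp: inner_axis)
  then show "(\<lambda>f::'d\<Rightarrow>real. (\<chi> j. f j) \<bullet> i) \<in> borel_measurable (\<Pi>\<^sub>M j\<in>UNIV. lborel)" by simp
qed

lemma lborel_vec_eq_distr_PiM:
  "(lborel :: (real^'d::finite) measure) = distr (\<Pi>\<^sub>M j\<in>(UNIV::'d set). lborel) borel (\<lambda>f. \<chi> j. f j)"
proof (rule lborel_eqI)
  fix l u :: "real^'d" assume le: "\<And>b. b \<in> Basis \<Longrightarrow> l \<bullet> b \<le> u \<bullet> b"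
  have le': "l $ j \<le> u $ j" for j using le[of "axis j 1"] by (auto simp: Basis_vec_def inner_axis)
  have pre: "(\<lambda>f. \<chi> j. f j) -` box l u \<inter> space (\<Pi>\<^sub>M j\<in>(UNIV::'d set). lborel) = PiE UNIV (\<lambda>j. {l$j<..<u$j})"
    by (auto simp: mem_box_cart space_PiM PiE_iff)
  have "emeasure (distr (\<Pi>\<^sub>M j\<in>(UNIV::'d set). lborel) borel (\<lambda>f. \<chi> j. f j)) (box l u)
     = emeasure (\<Pi>\<^sub>M j\<in>(UNIV::'d set). lborel) (PiE UNIV (\<lambda>j. {l$j<..<u$j}))"
    by (subst emeasure_distr) (auto simp: pre)
  also have "\<dots> = (\<Prod>j\<in>UNIV. emeasure lborel {l$j<..<u$j})"
    by (rule product_sigma_finite.emeasure_PiM) (auto simp: product_sigma_finite_def sigma_finite_lborel)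
  also have "\<dots> = ennreal (\<Prod>j\<in>UNIV. u$j - l$j)" using le' by (simp add: prod_ennreal)
  also have "(\<Prod>j\<in>UNIV. u$j - l$j) = (\<Prod>b\<in>Basis. (u - l) \<bullet> b)"
  proof -
    have B: "(Basis :: (real^'d) set) = (\<lambda>j. axis j 1) ` UNIV" by (auto simp: Basis_vec_def)
    have inj: "inj (\<lambda>j::'d. axis j (1::real))" by (auto simp: inj_def axis_eq_axis)
    show ?thesis unfolding B by (subst prod.reindex[OF inj]) (simp add: inner_axis)
  qed
  finally show "emeasure (distr (\<Pi>\<^sub>M j\<in>(UNIV::'d set). lborel) borel (\<lambda>f. \<chi> j. f j)) (box l u)
      = (\<Prod>b\<in>Basis. (u - l) \<bullet> b)" .
qed simp

abbreviation normal_measure :: "real \<Rightarrow> real measure" where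
  "normal_measure s \<equiv> density lborel (\<lambda>x. ennreal (normal_density 0 s x))"

abbreviation iid_normal :: "real \<Rightarrow> ('d::finite \<Rightarrow> real) measure" where
  "iid_normal s \<equiv> \<Pi>\<^sub>M j\<in>UNIV. normal_measure s"

lemma iid_normal_eq_density:
  assumes s: "0 < s"
  shows "iid_normal s =
    density (\<Pi>\<^sub>M j\<in>(UNIV::'d::finite set). lborel) (\<lambda>f. \<Prod>j\<in>UNIV. ennreal (normal_density 0 s (f j)))"
proof (rule sym, rule product_sigma_finite.PiM_eqI)
  show "product_sigma_finite (\<lambda>_::'d. normal_measure s)"
    unfolding product_sigma_finite_def
    using prob_space_normal_density[OF s] prob_space_imp_sigma_finite by blast
  fix A :: "'d \<Rightarrow> real set" assume A: "\<And>i. i \<in> UNIV \<Longrightarrow> A i \<in> sets (normal_measure s)"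
  have [measurable]: "A i \<in> sets borel" for i using A[of i] by simp
  have ind: "indicator (PiE UNIV A) f = (\<Prod>j\<in>UNIV. indicator (A j) (f j) :: ennreal)" for f
    by (auto simp: indicator_def PiE_iff)
  have "emeasure (density (\<Pi>\<^sub>M j\<in>(UNIV::'d set). lborel)
          (\<lambda>f. \<Prod>j\<in>UNIV. ennreal (normal_density 0 s (f j)))) (PiE UNIV A)
      = (\<integral>\<^sup>+ f. (\<Prod>j\<in>UNIV. ennreal (normal_density 0 s (f j)) * indicator (A j) (f j))
          \<partial>(\<Pi>\<^sub>M j\<in>UNIV. lborel))"
    by (subst emeasure_density) (auto intro!: sets_PiM_I_finite simp: ind prod.distrib)
  also have "\<dots> = (\<Prod>j\<in>UNIV. \<integral>\<^sup>+ x. ennreal (normal_density 0 s x) * indicator (A j) x \<partial>lborel)"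
    by (rule product_sigma_finite.product_nn_integral_prod)
      (auto simp: product_sigma_finite_def sigma_finite_lborel)
  also have "\<dots> = (\<Prod>j\<in>UNIV. emeasure (normal_measure s) (A j))"
    by (subst emeasure_density) auto
  finally show "emeasure (density (\<Pi>\<^sub>M j\<in>(UNIV::'d set). lborel)
          (\<lambda>f. \<Prod>j\<in>UNIV. ennreal (normal_density 0 s (f j)))) (PiE UNIV A)
      = (\<Prod>j\<in>UNIV. emeasure (normal_measure s) (A j))" .
qed (simp, simp only: sets_density, rule sets_PiM_cong, auto)

lemma gaussian_vec_eq_distr_iid_normal:
  assumes s: "0 < s"
  shows "gaussian_vec s = distr (iid_normal s) (borel :: (real^'d::finite) measure) (\<lambda>f. \<chi> j. f j)"
proof -
  have "gaussian_vec s = density (distr (\<Pi>\<^sub>M j\<in>(UNIV::'d set). lborel) borel (\<lambda>f. \<chi> j. f j))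
      (\<lambda>x. ennreal (gauss_density s x))"
    unfolding gaussian_vec_def by (subst lborel_vec_eq_distr_PiM) simp
  also have "\<dots> = distr (density (\<Pi>\<^sub>M j\<in>(UNIV::'d set). lborel)
      (\<lambda>f. ennreal (gauss_density s (\<chi> j. f j)))) borel (\<lambda>f. \<chi> j. f j)"
    by (rule density_distr) (auto simp: gauss_density_def)
  also have "(\<lambda>f. ennreal (gauss_density s (\<chi> j. f j)))
      = (\<lambda>f::'d\<Rightarrow>real. \<Prod>j\<in>UNIV. ennreal (normal_density 0 s (f j)))"
    by (auto simp: gauss_density_def prod_ennreal)
  finally show ?thesis by (simp add: iid_normal_eq_density[OF s])
qed

lemma prob_space_iid_normal: "0 < s \<Longrightarrow> prob_space (iid_normal s :: ('d::finite \<Rightarrow> real) measure)"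
  by (rule prob_space_PiM) (rule prob_space_normal_density)

lemma distributed_iid_normal_component:
  assumes s: "0 < s"
  shows "distributed (iid_normal s) lborel (\<lambda>f::'d::finite \<Rightarrow> real. f j)
           (\<lambda>x. ennreal (normal_density 0 s x))"
proof -
  have "distr (iid_normal s) lborel (\<lambda>f::'d \<Rightarrow> real. f j) = distr (iid_normal s) (normal_measure s) (\<lambda>f. f j)"
    by (rule distr_cong) auto
  also have "\<dots> = normal_measure s"
    by (rule distr_PiM_component) (auto intro: prob_space_normal_density[OF s])
  finally show ?thesis unfolding distributed_def by auto
qed

lemma indep_vars_iid_normal:
  assumes s: "0 < s"
  shows "prob_space.indep_vars (iid_normal s) (\<lambda>_. borel) (\<lambda>j f. f j) (UNIV::'d::finite set)"
proof -
  interpret prob_space "iid_normal s :: ('d \<Rightarrow> real) measure" by (rule prob_space_iid_normal[OF s])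
  have "distr (iid_normal s) (\<Pi>\<^sub>M j\<in>UNIV. normal_measure s) (\<lambda>f. \<lambda>j\<in>UNIV. f j) = iid_normal s"
    by (subst distr_cong[where g="\<lambda>x. x"]) (auto simp: space_PiM)
  moreover have "distr (iid_normal s) (normal_measure s) (\<lambda>f. f j) = normal_measure s" for j :: 'd
    by (rule distr_PiM_component) (auto intro: prob_space_normal_density[OF s])
  ultimately have "indep_vars (\<lambda>_. normal_measure s) (\<lambda>j f. f j) (UNIV::'d set)"
    by (subst indep_vars_iff_distr_eq_PiM) auto
  then have "indep_vars (\<lambda>_. borel) (\<lambda>j f. id (f j)) (UNIV::'d set)"
    by (rule indep_vars_compose2) simp
  then show ?thesis by simp
qed

lemma distributed_iid_normal_linear_combination:
  fixes a :: "'d::finite \<Rightarrow> real"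
  assumes s: "0 < s" and a: "\<exists>j. a j \<noteq> 0"
  shows "distributed (iid_normal s) lborel (\<lambda>f. \<Sum>j\<in>UNIV. a j * f j)
           (\<lambda>x. ennreal (normal_density 0 (s * sqrt (\<Sum>j\<in>UNIV. (a j)\<^sup>2)) x))"
proof -
  interpret prob_space "iid_normal s :: ('d \<Rightarrow> real) measure" by (rule prob_space_iid_normal[OF s])
  \<comment> \<open>\<open>normal_density_affine\<close> needs nonzero coefficients, so restrict to the support of \<open>a\<close>.\<close>
  define J where "J = {j. a j \<noteq> 0}"
  have J: "finite J" "J \<noteq> {}" using a by (auto simp: J_def)
  have "indep_vars (\<lambda>_. borel) (\<lambda>j f. f j) J"
    using indep_vars_iid_normal[OF s] by (rule indep_vars_subset) auto
  then have indep: "indep_vars (\<lambda>_. borel) (\<lambda>j f. a j * f j) J"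
    by (rule indep_vars_compose2[where Y="\<lambda>j x. a j * x"]) simp
  have "distributed (iid_normal s) lborel (\<lambda>f. \<Sum>j\<in>J. a j * f j)
      (\<lambda>x. ennreal (normal_density (\<Sum>j\<in>J. 0) (sqrt (\<Sum>j\<in>J. (\<bar>a j\<bar> * s)\<^sup>2)) x))"
    using normal_density_affine[OF distributed_iid_normal_component[OF s] s, of "a _" 0]
    by (intro sum_indep_normal[OF J indep]) (use s in \<open>auto simp: J_def\<close>)
  moreover have "(\<Sum>j\<in>J. a j * f j) = (\<Sum>j\<in>UNIV. a j * f j)" for f :: "'d \<Rightarrow> real"
    by (rule sum.mono_neutral_left) (auto simp: J_def)
  moreover have "sqrt (\<Sum>j\<in>J. (\<bar>a j\<bar> * s)\<^sup>2) = s * sqrt (\<Sum>j\<in>UNIV. (a j)\<^sup>2)"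
  proof -
    have "(\<Sum>j\<in>J. (\<bar>a j\<bar> * s)\<^sup>2) = s\<^sup>2 * (\<Sum>j\<in>UNIV. (a j)\<^sup>2)"
      by (subst sum.mono_neutral_left[of UNIV J, symmetric])
        (auto simp: J_def sum_distrib_left power_mult_distrib mult.commute)
    then show ?thesis using s by (simp add: real_sqrt_mult)
  qed
  ultimately show ?thesis by simp
qed

lemma sets_gaussian_vec [measurable_cong, simp]: "sets (gaussian_vec s) = sets borel"
  by (simp add: gaussian_vec_def)

lemma prob_space_gaussian_vec: "0 < s \<Longrightarrow> prob_space (gaussian_vec s :: (real^'d::finite) measure)"
  unfolding gaussian_vec_eq_distr_iid_normal
  by (rule prob_space.prob_space_distr[OF prob_space_iid_normal]) simp_all

lemma distributed_gaussian_vec_inner: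
  assumes s: "0 < s" and u: "u \<noteq> (0::real^'d::finite)"
  shows "distributed (gaussian_vec s :: (real^'d) measure) lborel (\<lambda>z. z \<bullet> u)
           (\<lambda>x. ennreal (normal_density 0 (s * norm u) x))"
proof -
  have "distr (gaussian_vec s :: (real^'d) measure) lborel (\<lambda>z. z \<bullet> u)
      = distr (iid_normal s) lborel (\<lambda>f. \<Sum>j\<in>UNIV. u $ j * f j)"
    unfolding gaussian_vec_eq_distr_iid_normal[OF s]
    by (subst distr_distr) (auto simp: comp_def inner_vec_def mult.commute)
  moreover have "\<exists>j. u $ j \<noteq> 0" using u by (auto simp: vec_eq_iff)
  ultimately show ?thesis
    using distributed_iid_normal_linear_combination[OF s, of "\<lambda>j. u $ j"]
    by (auto simp: distributed_def gaussian_vec_def norm_vec_def L2_set_def)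
qed

lemma nn_integral_gaussian_vec_inner:
  assumes s: "0 < s" and u: "u \<noteq> (0::real^'d::finite)" and g[measurable]: "g \<in> borel_measurable borel"
  shows "(\<integral>\<^sup>+ z. g (z \<bullet> u) \<partial>(gaussian_vec s :: (real^'d) measure))
       = (\<integral>\<^sup>+ x. ennreal (normal_density 0 (s * norm u) x) * g x \<partial>lborel)"
  by (rule distributed_nn_integral[OF distributed_gaussian_vec_inner[OF s u], symmetric]) simp

lemma nn_integral_normal_density_square:
  assumes s: "0 < s"
  shows "(\<integral>\<^sup>+ x. ennreal (normal_density 0 s x) * ennreal (x\<^sup>2) \<partial>lborel) = ennreal (s\<^sup>2)"
proof -
  have "has_bochner_integral lborel (\<lambda>x. normal_density 0 s x * (x - 0) ^ (2 * 1))
      (fact (2 * 1) / ((2 / s\<^sup>2) ^ 1 * fact 1))"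
    by (rule normal_moment_even) (use s in auto)
  then have "has_bochner_integral lborel (\<lambda>x. normal_density 0 s x * x\<^sup>2) (s\<^sup>2)"
    using s by (simp add: numeral_2_eq_2 field_simps power2_eq_square)
  then have "(\<integral>\<^sup>+ x. ennreal (normal_density 0 s x * x\<^sup>2) \<partial>lborel) = ennreal (s\<^sup>2)"
    by (subst nn_integral_eq_integral) (auto simp: has_bochner_integral_iff)
  then show ?thesis by (simp add: ennreal_mult)
qed

lemma nn_integral_gaussian_vec_inner_square:
  assumes s: "0 < s"
  shows "(\<integral>\<^sup>+ z. ennreal ((z \<bullet> w)\<^sup>2) \<partial>(gaussian_vec s :: (real^'d::finite) measure))
       = ennreal (s\<^sup>2 * (norm w)\<^sup>2)"
proof (cases "w = 0")
  case False
  have "(\<integral>\<^sup>+ z. ennreal ((z \<bullet> w)\<^sup>2) \<partial>(gaussian_vec s :: (real^'d) measure))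
      = (\<integral>\<^sup>+ x. ennreal (normal_density 0 (s * norm w) x) * ennreal (x\<^sup>2) \<partial>lborel)"
    by (rule nn_integral_gaussian_vec_inner[OF s False]) simp
  also have "\<dots> = ennreal (s\<^sup>2 * (norm w)\<^sup>2)"
    using s False by (simp add: nn_integral_normal_density_square power_mult_distrib)
  finally show ?thesis .
qed simp

lemma nn_integral_gaussian_vec_norm_square:
  assumes s: "0 < s"
  shows "(\<integral>\<^sup>+ z. ennreal ((norm z)\<^sup>2) \<partial>(gaussian_vec s :: (real^'d::finite) measure))
       = ennreal (real CARD('d) * s\<^sup>2)"
proof -
  have "(norm z)\<^sup>2 = (\<Sum>j\<in>UNIV. (z \<bullet> axis j 1)\<^sup>2)" for z :: "real^'d"
    by (simp add: norm_vec_def L2_set_def sum_nonneg inner_axis)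
  then have "ennreal ((norm z)\<^sup>2) = (\<Sum>j\<in>UNIV. ennreal ((z \<bullet> axis j 1)\<^sup>2))" for z :: "real^'d"
    by simp
  then have "(\<integral>\<^sup>+ z. ennreal ((norm z)\<^sup>2) \<partial>(gaussian_vec s :: (real^'d) measure))
      = (\<Sum>j\<in>UNIV. \<integral>\<^sup>+ z. ennreal ((z \<bullet> axis j 1)\<^sup>2) \<partial>(gaussian_vec s :: (real^'d) measure))"
    by (simp only:) (rule nn_integral_sum, simp)
  also have "\<dots> = (\<Sum>j\<in>(UNIV::'d set). ennreal (s\<^sup>2))"
    by (simp add: nn_integral_gaussian_vec_inner_square[OF s])
  finally show ?thesis by (simp add: ennreal_of_nat_eq_real_of_nat ennreal_mult)
qed

lemma nn_integral_gaussian_vec_inner_product_square: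
  assumes s: "0 < s"
  shows "(\<integral>\<^sup>+ z2. (\<integral>\<^sup>+ z1. ennreal ((z1 \<bullet> z2)\<^sup>2) \<partial>gaussian_vec s) \<partial>(gaussian_vec s :: (real^'d::finite) measure))
       = ennreal (real CARD('d) * s ^ 4)"
proof -
  have "(\<integral>\<^sup>+ z2. (\<integral>\<^sup>+ z1. ennreal ((z1 \<bullet> z2)\<^sup>2) \<partial>gaussian_vec s) \<partial>(gaussian_vec s :: (real^'d) measure))
      = (\<integral>\<^sup>+ z2. ennreal (s\<^sup>2) * ennreal ((norm z2)\<^sup>2) \<partial>(gaussian_vec s :: (real^'d) measure))"
    by (simp add: nn_integral_gaussian_vec_inner_square[OF s] ennreal_mult)
  also have "\<dots> = ennreal (s\<^sup>2) * ennreal (real CARD('d) * s\<^sup>2)"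
    by (subst nn_integral_cmult) (auto simp: nn_integral_gaussian_vec_norm_square[OF s])
  also have "\<dots> = ennreal (real CARD('d) * s ^ 4)"
    using s by (subst ennreal_mult[symmetric]) (auto simp: power_def mult_ac)
  finally show ?thesis .
qed

lemma nn_integral_normal_density_add:
  assumes s: "0 < s" and t: "0 < t" and g[measurable]: "g \<in> borel_measurable borel"
  shows "(\<integral>\<^sup>+ w. (\<integral>\<^sup>+ y. ennreal (normal_density 0 t w * normal_density 0 s y) * g (w + y) \<partial>lborel) \<partial>lborel)
       = (\<integral>\<^sup>+ x. ennreal (normal_density 0 (sqrt (s\<^sup>2 + t\<^sup>2)) x) * g x \<partial>lborel)"
proof -
  have "(\<integral>\<^sup>+ x. ennreal (normal_density 0 (sqrt (s\<^sup>2 + t\<^sup>2)) x) * g x \<partial>lborel)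
      = (\<integral>\<^sup>+ x. (\<integral>\<^sup>+ w. ennreal (normal_density 0 s (x - w) * normal_density 0 t w) \<partial>lborel) * g x \<partial>lborel)"
    using fun_cong[OF conv_normal_density_zero_mean[OF s t]] by simp
  also have "\<dots> = (\<integral>\<^sup>+ x. (\<integral>\<^sup>+ w. ennreal (normal_density 0 s (x - w) * normal_density 0 t w) * g x \<partial>lborel) \<partial>lborel)"
    by (rule nn_integral_cong, rule nn_integral_multc[symmetric]) measurable
  also have "\<dots> = (\<integral>\<^sup>+ w. (\<integral>\<^sup>+ x. ennreal (normal_density 0 s (x - w) * normal_density 0 t w) * g x \<partial>lborel) \<partial>lborel)"
    by (rule lborel_pair.Fubini') measurable
  also have "\<dots> = (\<integral>\<^sup>+ w. (\<integral>\<^sup>+ y. ennreal (normal_density 0 t w * normal_density 0 s y) * g (w + y) \<partial>lborel) \<partial>lborel)"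
  proof (rule nn_integral_cong)
    fix w :: real
    show "(\<integral>\<^sup>+ x. ennreal (normal_density 0 s (x - w) * normal_density 0 t w) * g x \<partial>lborel)
        = (\<integral>\<^sup>+ y. ennreal (normal_density 0 t w * normal_density 0 s y) * g (w + y) \<partial>lborel)"
      by (subst nn_integral_real_affine[where c=1 and t=w]) (auto simp: mult.commute)
  qed
  finally show ?thesis ..
qed

lemma nn_integral_gaussian_vec_cross_term:
  fixes a b :: "real^'d::finite"
  assumes s: "0 < s" and a: "norm a = 1" and b: "norm b = 1" and g[measurable]: "g \<in> borel_measurable borel"
  shows "(\<integral>\<^sup>+ z2. (\<integral>\<^sup>+ z1. g (a \<bullet> z2 + z1 \<bullet> b) \<partial>gaussian_vec s) \<partial>(gaussian_vec s :: (real^'d) measure))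
       = (\<integral>\<^sup>+ z. g (z \<bullet> a) \<partial>(gaussian_vec (sqrt 2 * s) :: (real^'d) measure))"
proof -
  have a0: "a \<noteq> 0" and b0: "b \<noteq> 0" using a b by auto
  define H where "H w = (\<integral>\<^sup>+ y. ennreal (normal_density 0 s y) * g (w + y) \<partial>lborel)" for w
  have [measurable]: "H \<in> borel_measurable borel"
    unfolding H_def by (rule lborel.borel_measurable_nn_integral) measurable
  have "(\<integral>\<^sup>+ z1. g (a \<bullet> z2 + z1 \<bullet> b) \<partial>gaussian_vec s) = H (z2 \<bullet> a)" for z2 :: "real^'d"
    using nn_integral_gaussian_vec_inner[OF s b0, of "\<lambda>y. g (a \<bullet> z2 + y)"]
    by (simp add: H_def b inner_commute)
  then have "(\<integral>\<^sup>+ z2. (\<integral>\<^sup>+ z1. g (a \<bullet> z2 + z1 \<bullet> b) \<partial>gaussian_vec s) \<partial>(gaussian_vec s :: (real^'d) measure))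
      = (\<integral>\<^sup>+ w. ennreal (normal_density 0 s w) * H w \<partial>lborel)"
    using nn_integral_gaussian_vec_inner[OF s a0, of H] by (simp add: a)
  also have "\<dots> = (\<integral>\<^sup>+ w. (\<integral>\<^sup>+ y. ennreal (normal_density 0 s w * normal_density 0 s y) * g (w + y) \<partial>lborel) \<partial>lborel)"
    unfolding H_def
    by (rule nn_integral_cong, subst nn_integral_cmult[symmetric]) (auto simp: ennreal_mult mult.assoc)
  also have "\<dots> = (\<integral>\<^sup>+ x. ennreal (normal_density 0 (sqrt 2 * s) x) * g x \<partial>lborel)"
    using s by (simp add: nn_integral_normal_density_add real_sqrt_mult)
  also have "\<dots> = (\<integral>\<^sup>+ z. g (z \<bullet> a) \<partial>(gaussian_vec (sqrt 2 * s) :: (real^'d) measure))"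
    using nn_integral_gaussian_vec_inner[of "sqrt 2 * s" a g] s a0 by (simp add: a)
  finally show ?thesis .
qed

lemma nn_integral_gaussian_vec_cross_term_tail:
  fixes a b :: "real^'d::finite"
  assumes s: "0 < s" and a: "norm a = 1" and b: "norm b = 1"
  shows "(\<integral>\<^sup>+ z2. (\<integral>\<^sup>+ z1. indicator {q. t \<le> \<bar>q\<bar>} (a \<bullet> z2 + z1 \<bullet> b) \<partial>gaussian_vec s)
           \<partial>(gaussian_vec s :: (real^'d) measure))
       = emeasure (gaussian_vec (sqrt 2 * s) :: (real^'d) measure) {z. t \<le> \<bar>z \<bullet> a\<bar>}"
proof -
  have "(\<integral>\<^sup>+ z2. (\<integral>\<^sup>+ z1. indicator {q. t \<le> \<bar>q\<bar>} (a \<bullet> z2 + z1 \<bullet> b) \<partial>gaussian_vec s)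
           \<partial>(gaussian_vec s :: (real^'d) measure))
      = (\<integral>\<^sup>+ z. indicator {q. t \<le> \<bar>q\<bar>} (z \<bullet> a) \<partial>(gaussian_vec (sqrt 2 * s) :: (real^'d) measure))"
    by (rule nn_integral_gaussian_vec_cross_term[OF s a b]) measurable
  also have "\<dots> = (\<integral>\<^sup>+ z. indicator {z. t \<le> \<bar>z \<bullet> a\<bar>} z \<partial>(gaussian_vec (sqrt 2 * s) :: (real^'d) measure))"
    by (rule nn_integral_cong) (simp add: indicator_def)
  also have "\<dots> = emeasure (gaussian_vec (sqrt 2 * s)) {z. t \<le> \<bar>z \<bullet> a\<bar>}"
    by (rule nn_integral_indicator) measurable
  finally show ?thesis .
qed

section \<open>Integrals against three independent random variables\<close>

lemma nn_integral_PiM_three: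
  fixes K :: "nat \<Rightarrow> 'b measure" and F :: "'b \<times> 'b \<times> 'b \<Rightarrow> ennreal"
  assumes K: "\<And>i. sigma_finite_measure (K i)"
    and F [measurable]: "F \<in> borel_measurable (K 0 \<Otimes>\<^sub>M (K 1 \<Otimes>\<^sub>M K 2))"
  shows "(\<integral>\<^sup>+ p. F (p 0, p 1, p 2) \<partial>PiM {0, 1, 2} K)
       = (\<integral>\<^sup>+ c. (\<integral>\<^sup>+ b. (\<integral>\<^sup>+ a. F (a, b, c) \<partial>K 0) \<partial>K 1) \<partial>K 2)"
proof -
  interpret product_sigma_finite K using K by (simp add: product_sigma_finite_def)
  interpret K12: pair_sigma_finite "K 1" "K 2" using K by (simp add: pair_sigma_finite_def)
  define G where "G x = (\<integral>\<^sup>+ a. F (a, x) \<partial>K 0)" for x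
  have G [measurable]: "G \<in> borel_measurable (K 1 \<Otimes>\<^sub>M K 2)"
    unfolding G_def by (rule sigma_finite_measure.borel_measurable_nn_integral[OF K]) measurable
  have "(\<integral>\<^sup>+ p. F (p 0, p 1, p 2) \<partial>PiM {0, 1, 2} K)
      = (\<integral>\<^sup>+ x. (\<integral>\<^sup>+ y. F ((x(0 := y)) 0, (x(0 := y)) 1, (x(0 := y)) 2) \<partial>K 0) \<partial>PiM {1, 2} K)"
    by (rule product_nn_integral_insert) measurable
  also have "\<dots> = (\<integral>\<^sup>+ x. G (x 1, x 2) \<partial>PiM {1, 2} K)" by (simp add: G_def)
  also have "\<dots> = (\<integral>\<^sup>+ z. G z \<partial>(K 1 \<Otimes>\<^sub>M K 2))"
    using product_nn_integral_pair[of "curry G" 1 2, unfolded case_prod_curry, OF G] by simp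
  also have "\<dots> = (\<integral>\<^sup>+ c. (\<integral>\<^sup>+ b. G (b, c) \<partial>K 1) \<partial>K 2)"
    by (rule K12.nn_integral_snd[symmetric, OF G])
  finally show ?thesis by (simp add: G_def)
qed

lemma (in prob_space) nn_integral_indep_vars_three:
  fixes Z :: "nat \<Rightarrow> 'a \<Rightarrow> 'b" and F :: "'b \<times> 'b \<times> 'b \<Rightarrow> ennreal"
  assumes rv: "\<And>i. random_variable N (Z i)" and indep: "indep_vars (\<lambda>_. N) Z {0, 1, 2}"
    and F [measurable]: "F \<in> borel_measurable (N \<Otimes>\<^sub>M (N \<Otimes>\<^sub>M N))"
  shows "(\<integral>\<^sup>+ \<omega>. F (Z 0 \<omega>, Z 1 \<omega>, Z 2 \<omega>) \<partial>M)
       = (\<integral>\<^sup>+ c. (\<integral>\<^sup>+ b. (\<integral>\<^sup>+ a. F (a, b, c) \<partial>distr M N (Z 0)) \<partial>distr M N (Z 1)) \<partial>distr M N (Z 2))"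
proof -
  have law: "distr M (PiM {0, 1, 2} (\<lambda>_. N)) (\<lambda>\<omega>. \<lambda>i\<in>{0, 1, 2}. Z i \<omega>)
      = PiM {0, 1, 2} (\<lambda>i. distr M N (Z i))"
    by (rule indep_vars_iff_distr_eq_PiM'[THEN iffD1, OF _ rv indep]) simp
  have Zm: "(\<lambda>\<omega>. \<lambda>i\<in>{0, 1, 2}. Z i \<omega>) \<in> M \<rightarrow>\<^sub>M PiM {0, 1, 2} (\<lambda>_. N)"
    by (rule measurable_restrict) (rule rv)
  have "(\<lambda>p. (p 0, p 1, p 2)) \<in> PiM {0, 1, 2} (\<lambda>_. N) \<rightarrow>\<^sub>M N \<Otimes>\<^sub>M (N \<Otimes>\<^sub>M N)"
    by (intro measurable_Pair measurable_component_singleton) auto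
  then have Fm: "(\<lambda>p. F (p 0, p 1, p 2)) \<in> borel_measurable (PiM {0, 1, 2} (\<lambda>_. N))"
    using F by (rule measurable_compose)
  have "(\<integral>\<^sup>+ \<omega>. F (Z 0 \<omega>, Z 1 \<omega>, Z 2 \<omega>) \<partial>M)
      = (\<integral>\<^sup>+ p. F (p 0, p 1, p 2) \<partial>distr M (PiM {0, 1, 2} (\<lambda>_. N)) (\<lambda>\<omega>. \<lambda>i\<in>{0, 1, 2}. Z i \<omega>))"
    by (subst nn_integral_distr[OF Zm]) (use Fm in simp_all)
  also have "\<dots> = (\<integral>\<^sup>+ p. F (p 0, p 1, p 2) \<partial>PiM {0, 1, 2} (\<lambda>i. distr M N (Z i)))"
    by (simp only: law)
  also have "\<dots> = (\<integral>\<^sup>+ c. (\<integral>\<^sup>+ b. (\<integral>\<^sup>+ a. F (a, b, c) \<partial>distr M N (Z 0)) \<partial>distr M N (Z 1)) \<partial>distr M N (Z 2))"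
  proof (rule nn_integral_PiM_three)
    show "sigma_finite_measure (distr M N (Z i))" for i
      by (rule prob_space_imp_sigma_finite, rule prob_space_distr, rule rv)
    have "sets (distr M N (Z 0) \<Otimes>\<^sub>M (distr M N (Z 1) \<Otimes>\<^sub>M distr M N (Z 2))) = sets (N \<Otimes>\<^sub>M (N \<Otimes>\<^sub>M N))"
      by (intro sets_pair_measure_cong sets_distr)
    then show "F \<in> borel_measurable (distr M N (Z 0) \<Otimes>\<^sub>M (distr M N (Z 1) \<Otimes>\<^sub>M distr M N (Z 2)))"
      by (subst measurable_cong_sets[OF _ refl]) (assumption, rule F)
  qed
  finally show ?thesis .
qed

section \<open>Signals perturbed by independent Gaussian noise\<close>

lemma (in prob_space) prob_le_prob_add:
  assumes [measurable]: "Measurable.pred M Q" "Measurable.pred M R"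
    and "\<And>\<omega>. \<omega> \<in> space M \<Longrightarrow> P \<omega> \<Longrightarrow> Q \<omega> \<or> R \<omega>"
  shows "prob {\<omega>\<in>space M. P \<omega>} \<le> prob {\<omega>\<in>space M. Q \<omega>} + prob {\<omega>\<in>space M. R \<omega>}"
proof -
  have "prob {\<omega>\<in>space M. P \<omega>} \<le> prob ({\<omega>\<in>space M. Q \<omega>} \<union> {\<omega>\<in>space M. R \<omega>})"
    by (rule finite_measure_mono) (use assms(3) in auto)
  also have "\<dots> \<le> prob {\<omega>\<in>space M. Q \<omega>} + prob {\<omega>\<in>space M. R \<omega>}"
    by (rule measure_Un_le) simp_all
  finally show ?thesis .
qed

lemma measurable_fst_borel [measurable]:
  "(fst :: 'a::second_countable_topology \<times> 'b::second_countable_topology \<Rightarrow> 'a) \<in> borel \<rightarrow>\<^sub>M borel"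
  unfolding borel_prod[symmetric] by measurable

lemma measurable_snd_borel [measurable]:
  "(snd :: 'a::second_countable_topology \<times> 'b::second_countable_topology \<Rightarrow> 'b) \<in> borel \<rightarrow>\<^sub>M borel"
  unfolding borel_prod[symmetric] by measurable

lemma vimage_sets_comp_left_inverse:
  assumes g: "g \<in> N \<rightarrow>\<^sub>M N'" and h: "h \<in> N' \<rightarrow>\<^sub>M N" and "\<And>x. h (g x) = x"
    and "space N = UNIV" and "space N' = UNIV"
  shows "{(\<lambda>\<omega>. g (X \<omega>)) -` A \<inter> S | A. A \<in> sets N'} = {X -` B \<inter> S | B. B \<in> sets N}"
proof (intro equalityI subsetI)
  fix E assume "E \<in> {(\<lambda>\<omega>. g (X \<omega>)) -` A \<inter> S | A. A \<in> sets N'}"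
  then obtain A where A: "A \<in> sets N'" "E = (\<lambda>\<omega>. g (X \<omega>)) -` A \<inter> S" by auto
  then have "E = X -` (g -` A \<inter> space N) \<inter> S" using assms by auto
  with measurable_sets[OF g A(1)] show "E \<in> {X -` B \<inter> S | B. B \<in> sets N}" by blast
next
  fix E assume "E \<in> {X -` B \<inter> S | B. B \<in> sets N}"
  then obtain B where B: "B \<in> sets N" "E = X -` B \<inter> S" by auto
  then have "E = (\<lambda>\<omega>. g (X \<omega>)) -` (h -` B \<inter> space N') \<inter> S" using assms by auto
  with measurable_sets[OF h B(1)] show "E \<in> {(\<lambda>\<omega>. g (X \<omega>)) -` A \<inter> S | A. A \<in> sets N'}" by blast
qed

locale gaussian_noise_model = prob_space M for M :: "'a measure" +
  fixes x1 x2 e1 e2 :: "'a \<Rightarrow> real^'d::finite" and \<sigma> :: real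
  assumes sigma_pos: "0 < \<sigma>"
    and x1_measurable [measurable]: "x1 \<in> borel_measurable M"
    and x2_measurable [measurable]: "x2 \<in> borel_measurable M"
    and e1_gaussian: "distributed M lborel e1 (\<lambda>z. ennreal (gauss_density \<sigma> z))"
    and e2_gaussian: "distributed M lborel e2 (\<lambda>z. ennreal (gauss_density \<sigma> z))"
    and indep_noise_signal: "indep_sets (\<lambda>i::nat.
          if i = 0 then {e1 -` A \<inter> space M | A. A \<in> sets borel}
          else if i = 1 then {e2 -` A \<inter> space M | A. A \<in> sets borel}
          else {(\<lambda>\<omega>. (x1 \<omega>, x2 \<omega>)) -` A \<inter> space M | A. A \<in> sets borel}) {0, 1, 2}"
begin

lemma e1_measurable [measurable]: "e1 \<in> borel_measurable M"
  using distributed_measurable[OF e1_gaussian] by (simp add: measurable_lborel2)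

lemma e2_measurable [measurable]: "e2 \<in> borel_measurable M"
  using distributed_measurable[OF e2_gaussian] by (simp add: measurable_lborel2)

lemma distr_e1: "distr M borel e1 = gaussian_vec \<sigma>"
proof -
  have "distr M borel e1 = distr M lborel e1" by (rule distr_cong) auto
  then show ?thesis using e1_gaussian by (simp add: distributed_def gaussian_vec_def)
qed

lemma distr_e2: "distr M borel e2 = gaussian_vec \<sigma>"
proof -
  have "distr M borel e2 = distr M lborel e2" by (rule distr_cong) auto
  then show ?thesis using e2_gaussian by (simp add: distributed_def gaussian_vec_def)
qed

text \<open>\<open>indep_vars\<close> needs a common range, so the noise vectors are padded into pairs.\<close>

definition noise_signal :: "nat \<Rightarrow> 'a \<Rightarrow> (real^'d) \<times> (real^'d)" where
  "noise_signal i \<omega> = (if i = 0 then (e1 \<omega>, 0) else if i = 1 then (e2 \<omega>, 0) else (x1 \<omega>, x2 \<omega>))"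

lemma noise_signal_measurable [measurable]: "noise_signal i \<in> borel_measurable M"
  unfolding noise_signal_def by measurable

lemma indep_vars_noise_signal: "indep_vars (\<lambda>_. borel) noise_signal {0, 1, 2}"
proof -
  have pad: "(\<lambda>z::real^'d. (z, 0::real^'d)) \<in> borel \<rightarrow>\<^sub>M borel" by measurable
  have "{noise_signal i -` A \<inter> space M | A. A \<in> sets borel} =
      (if i = 0 then {e1 -` A \<inter> space M | A. A \<in> sets borel}
       else if i = 1 then {e2 -` A \<inter> space M | A. A \<in> sets borel}
       else {(\<lambda>\<omega>. (x1 \<omega>, x2 \<omega>)) -` A \<inter> space M | A. A \<in> sets borel})" for i
    using vimage_sets_comp_left_inverse[OF pad measurable_fst_borel, of e1 "space M"]
      vimage_sets_comp_left_inverse[OF pad measurable_fst_borel, of e2 "space M"]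
    by (simp add: noise_signal_def[abs_def])
  then show ?thesis
    unfolding indep_vars_def2 using indep_noise_signal by simp
qed

lemma nn_integral_noise_signal:
  fixes F :: "(real^'d) \<times> (real^'d) \<times> (real^'d) \<times> (real^'d) \<Rightarrow> ennreal"
  assumes F [measurable]: "F \<in> borel_measurable (borel \<Otimes>\<^sub>M (borel \<Otimes>\<^sub>M borel))"
  shows "(\<integral>\<^sup>+ \<omega>. F (e1 \<omega>, e2 \<omega>, x1 \<omega>, x2 \<omega>) \<partial>M)
       = (\<integral>\<^sup>+ c. (\<integral>\<^sup>+ b. (\<integral>\<^sup>+ a. F (a, b, c) \<partial>gaussian_vec \<sigma>) \<partial>gaussian_vec \<sigma>) \<partial>distr M borel (\<lambda>\<omega>. (x1 \<omega>, x2 \<omega>)))"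
proof -
  interpret G: prob_space "gaussian_vec \<sigma> :: (real^'d) measure"
    by (rule prob_space_gaussian_vec[OF sigma_pos])
  have noise: "(\<integral>\<^sup>+ a. h (fst a) \<partial>distr M borel (noise_signal i)) = (\<integral>\<^sup>+ z. h z \<partial>gaussian_vec \<sigma>)"
    if "i = 0 \<or> i = 1" and [measurable]: "h \<in> borel_measurable borel" for i h
    using that(1)
  proof
    assume "i = 0"
    then show ?thesis by (simp add: nn_integral_distr noise_signal_def flip: distr_e1)
  next
    assume "i = 1"
    then show ?thesis by (simp add: nn_integral_distr noise_signal_def flip: distr_e2)
  qed
  have inner [measurable]: "(\<lambda>b. \<integral>\<^sup>+ a. F (a, b, c) \<partial>gaussian_vec \<sigma>) \<in> borel_measurable borel" for c
    by (rule G.borel_measurable_nn_integral) measurable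
  have "(\<integral>\<^sup>+ \<omega>. F (e1 \<omega>, e2 \<omega>, x1 \<omega>, x2 \<omega>) \<partial>M)
      = (\<integral>\<^sup>+ c. (\<integral>\<^sup>+ b. (\<integral>\<^sup>+ a. F (fst a, fst b, c) \<partial>distr M borel (noise_signal 0))
          \<partial>distr M borel (noise_signal 1)) \<partial>distr M borel (noise_signal 2))"
    using nn_integral_indep_vars_three[OF noise_signal_measurable indep_vars_noise_signal,
        where F="\<lambda>t. F (fst (fst t), fst (fst (snd t)), snd (snd t))"]
    by (simp add: noise_signal_def)
  also have "\<dots> = (\<integral>\<^sup>+ c. (\<integral>\<^sup>+ b. (\<integral>\<^sup>+ a. F (a, fst b, c) \<partial>gaussian_vec \<sigma>)
      \<partial>distr M borel (noise_signal 1)) \<partial>distr M borel (noise_signal 2))"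
    by (intro nn_integral_cong noise) measurable
  also have "\<dots> = (\<integral>\<^sup>+ c. (\<integral>\<^sup>+ b. (\<integral>\<^sup>+ a. F (a, b, c) \<partial>gaussian_vec \<sigma>) \<partial>gaussian_vec \<sigma>)
      \<partial>distr M borel (noise_signal 2))"
    by (intro nn_integral_cong) (use noise[of 1 "\<lambda>b. \<integral>\<^sup>+ a. F (a, b, _) \<partial>gaussian_vec \<sigma>"] in simp)
  also have "noise_signal 2 = (\<lambda>\<omega>. (x1 \<omega>, x2 \<omega>))"
    by (simp add: noise_signal_def fun_eq_iff)
  finally show ?thesis .
qed

lemma prob_cross_term_ge:
  assumes x1_unit: "\<forall>\<omega>\<in>space M. norm (x1 \<omega>) = 1" and x2_unit: "\<forall>\<omega>\<in>space M. norm (x2 \<omega>) = 1"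
    and tail: "\<And>a::real^'d. norm a = 1 \<Longrightarrow> measure (gaussian_vec (sqrt 2 * \<sigma>)) {z. t \<le> \<bar>z \<bullet> a\<bar>} \<le> B"
  shows "prob {\<omega>\<in>space M. t \<le> \<bar>x1 \<omega> \<bullet> e2 \<omega> + e1 \<omega> \<bullet> x2 \<omega>\<bar>} \<le> B"
proof -
  let ?S = "{q::real. t \<le> \<bar>q\<bar>}"
  let ?X = "distr M borel (\<lambda>\<omega>. (x1 \<omega>, x2 \<omega>))"
  interpret G: prob_space "gaussian_vec (sqrt 2 * \<sigma>) :: (real^'d) measure"
    using sigma_pos by (intro prob_space_gaussian_vec) simp
  interpret X: prob_space ?X by (rule prob_space_distr) simp
  have "0 \<le> B" using tail[of "axis undefined 1"] by (metis measure_nonneg norm_axis_1 order_trans)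
  have "AE c in ?X. norm (fst c) = 1 \<and> norm (snd c) = 1"
    using x1_unit x2_unit by (subst AE_distr_iff) auto
  then have bound: "AE c in ?X.
      (\<integral>\<^sup>+ b. (\<integral>\<^sup>+ a. indicator ?S (fst c \<bullet> b + a \<bullet> snd c) \<partial>gaussian_vec \<sigma>) \<partial>gaussian_vec \<sigma>) \<le> ennreal B"
    by (rule eventually_mono)
      (auto simp: nn_integral_gaussian_vec_cross_term_tail[OF sigma_pos] G.emeasure_eq_measure
        intro: ennreal_leI tail)
  have "(\<lambda>(a, b, c). indicator ?S (fst c \<bullet> b + a \<bullet> snd c) :: ennreal)
      \<in> borel_measurable (borel \<Otimes>\<^sub>M (borel \<Otimes>\<^sub>M (borel :: ((real^'d) \<times> (real^'d)) measure)))"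
    by measurable
  note cross_term = nn_integral_noise_signal[OF this, simplified]
  have "emeasure M {\<omega>\<in>space M. t \<le> \<bar>x1 \<omega> \<bullet> e2 \<omega> + e1 \<omega> \<bullet> x2 \<omega>\<bar>}
      = (\<integral>\<^sup>+ \<omega>. indicator ?S (x1 \<omega> \<bullet> e2 \<omega> + e1 \<omega> \<bullet> x2 \<omega>) \<partial>M)"
    by (subst nn_integral_indicator[symmetric], measurable)
      (rule nn_integral_cong, simp add: indicator_def)
  also have "\<dots> = (\<integral>\<^sup>+ c. (\<integral>\<^sup>+ b. (\<integral>\<^sup>+ a. indicator ?S (fst c \<bullet> b + a \<bullet> snd c) \<partial>gaussian_vec \<sigma>)
      \<partial>gaussian_vec \<sigma>) \<partial>?X)"
    by (rule cross_term)
  also have "\<dots> \<le> (\<integral>\<^sup>+ c. ennreal B \<partial>?X)"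
    using bound by (rule nn_integral_mono_AE)
  also have "\<dots> = ennreal B"
    by (simp add: X.emeasure_space_1[simplified])
  finally show ?thesis using \<open>0 \<le> B\<close> by (simp add: emeasure_eq_measure)
qed

lemma nn_integral_noise_inner_square:
  "(\<integral>\<^sup>+ \<omega>. ennreal ((e1 \<omega> \<bullet> e2 \<omega>)\<^sup>2) \<partial>M) = ennreal (real CARD('d) * \<sigma> ^ 4)"
proof -
  interpret X: prob_space "distr M borel (\<lambda>\<omega>. (x1 \<omega>, x2 \<omega>))" by (rule prob_space_distr) simp
  have "(\<lambda>(a::real^'d, b::real^'d, c::(real^'d) \<times> (real^'d)). ennreal ((a \<bullet> b)\<^sup>2))
      \<in> borel_measurable (borel \<Otimes>\<^sub>M (borel \<Otimes>\<^sub>M borel))"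
    by measurable
  from nn_integral_noise_signal[OF this] show ?thesis
    by (simp add: nn_integral_gaussian_vec_inner_product_square[OF sigma_pos] X.emeasure_space_1[simplified])
qed

lemma prob_noise_inner_ge:
  assumes t: "0 < t"
  shows "prob {\<omega>\<in>space M. t \<le> \<bar>e1 \<omega> \<bullet> e2 \<omega>\<bar>} \<le> real CARD('d) * \<sigma> ^ 4 / t\<^sup>2"
proof -
  have Chebyshev: "indicator {\<omega>\<in>space M. t \<le> \<bar>e1 \<omega> \<bullet> e2 \<omega>\<bar>} \<omega>
      \<le> ennreal (1 / t\<^sup>2) * ennreal ((e1 \<omega> \<bullet> e2 \<omega>)\<^sup>2)" for \<omega>
  proof (cases "\<omega> \<in> space M \<and> t \<le> \<bar>e1 \<omega> \<bullet> e2 \<omega>\<bar>")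
    case True
    then have "t\<^sup>2 \<le> (e1 \<omega> \<bullet> e2 \<omega>)\<^sup>2" using t by (metis power2_abs power_mono less_imp_le)
    then have "1 \<le> 1 / t\<^sup>2 * (e1 \<omega> \<bullet> e2 \<omega>)\<^sup>2" using t by (simp add: field_simps)
    then show ?thesis using True by (simp add: ennreal_mult[symmetric] ennreal_1[symmetric] del: ennreal_1)
  qed simp
  have "emeasure M {\<omega>\<in>space M. t \<le> \<bar>e1 \<omega> \<bullet> e2 \<omega>\<bar>}
      = (\<integral>\<^sup>+ \<omega>. indicator {\<omega>\<in>space M. t \<le> \<bar>e1 \<omega> \<bullet> e2 \<omega>\<bar>} \<omega> \<partial>M)"
    by (rule nn_integral_indicator[symmetric]) measurable
  also have "\<dots> \<le> (\<integral>\<^sup>+ \<omega>. ennreal (1 / t\<^sup>2) * ennreal ((e1 \<omega> \<bullet> e2 \<omega>)\<^sup>2) \<partial>M)"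
    by (rule nn_integral_mono) (rule Chebyshev)
  also have "\<dots> = ennreal (1 / t\<^sup>2) * ennreal (real CARD('d) * \<sigma> ^ 4)"
    by (subst nn_integral_cmult) (simp_all add: nn_integral_noise_inner_square)
  also have "\<dots> = ennreal (real CARD('d) * \<sigma> ^ 4 / t\<^sup>2)"
    by (simp add: ennreal_mult[symmetric])
  finally show ?thesis by (simp add: emeasure_eq_measure)
qed

lemma prob_noisy_inner_deviation:
  assumes x1_unit: "\<forall>\<omega>\<in>space M. norm (x1 \<omega>) = 1" and x2_unit: "\<forall>\<omega>\<in>space M. norm (x2 \<omega>) = 1"
    and tail: "\<And>a::real^'d. norm a = 1 \<Longrightarrow>
      measure (gaussian_vec (sqrt 2 * \<sigma>)) {z. sqrt 2 * \<delta> \<le> \<bar>z \<bullet> a\<bar>} \<le> B"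
    and \<delta>: "0 < \<delta>"
  shows "prob {\<omega>\<in>space M. 3 * \<delta> \<le> \<bar>(x1 \<omega> + e1 \<omega>) \<bullet> (x2 \<omega> + e2 \<omega>) - x1 \<omega> \<bullet> x2 \<omega>\<bar>}
    \<le> B + real CARD('d) * \<sigma> ^ 4 / (2 * \<delta>\<^sup>2)"
proof -
  define t where "t = (3 - sqrt 2) * \<delta>"
  have "sqrt 2 \<le> sqrt ((3/2)\<^sup>2)" by (rule real_sqrt_le_mono) (simp add: power2_eq_square)
  then have "3/2 \<le> 3 - sqrt 2" by simp
  then have t: "0 < t" and t2: "2 * \<delta>\<^sup>2 \<le> t\<^sup>2"
    using \<delta> power_mono[of "3/2" "3 - sqrt 2" 2] unfolding t_def
    by (auto simp: power_mult_distrib power2_eq_square intro!: mult_right_mono)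
  have split: "sqrt 2 * \<delta> \<le> \<bar>(x1 \<omega> \<bullet> e2 \<omega> + e1 \<omega> \<bullet> x2 \<omega>)\<bar> \<or> t \<le> \<bar>e1 \<omega> \<bullet> e2 \<omega>\<bar>"
    if "3 * \<delta> \<le> \<bar>(x1 \<omega> + e1 \<omega>) \<bullet> (x2 \<omega> + e2 \<omega>) - x1 \<omega> \<bullet> x2 \<omega>\<bar>" for \<omega>
  proof -
    have "(x1 \<omega> + e1 \<omega>) \<bullet> (x2 \<omega> + e2 \<omega>) - x1 \<omega> \<bullet> x2 \<omega> = (x1 \<omega> \<bullet> e2 \<omega> + e1 \<omega> \<bullet> x2 \<omega>) + e1 \<omega> \<bullet> e2 \<omega>"
      by (simp add: inner_add_left inner_add_right inner_commute)
    then show ?thesis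
      using that abs_triangle_ineq[of "x1 \<omega> \<bullet> e2 \<omega> + e1 \<omega> \<bullet> x2 \<omega>" "e1 \<omega> \<bullet> e2 \<omega>"]
      unfolding t_def left_diff_distrib by linarith
  qed
  have "prob {\<omega>\<in>space M. 3 * \<delta> \<le> \<bar>(x1 \<omega> + e1 \<omega>) \<bullet> (x2 \<omega> + e2 \<omega>) - x1 \<omega> \<bullet> x2 \<omega>\<bar>}
      \<le> prob {\<omega>\<in>space M. sqrt 2 * \<delta> \<le> \<bar>x1 \<omega> \<bullet> e2 \<omega> + e1 \<omega> \<bullet> x2 \<omega>\<bar>} + prob {\<omega>\<in>space M. t \<le> \<bar>e1 \<omega> \<bullet> e2 \<omega>\<bar>}"
    by (rule prob_le_prob_add) (measurable, measurable, erule split)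
  also have "\<dots> \<le> B + real CARD('d) * \<sigma> ^ 4 / t\<^sup>2"
    using prob_cross_term_ge[OF x1_unit x2_unit tail] prob_noise_inner_ge[OF t] by (rule add_mono)
  also have "real CARD('d) * \<sigma> ^ 4 / t\<^sup>2 \<le> real CARD('d) * \<sigma> ^ 4 / (2 * \<delta>\<^sup>2)"
    using t2 \<delta> t by (intro divide_left_mono) auto
  finally show ?thesis by simp
qed

end

theorem lemma4:
  fixes M :: "'a measure"
    and x1 x2 e1 e2 :: "'a \<Rightarrow> real^'d"
    and c \<sigma> v p \<delta> :: real
  assumes c_pos: "c > 0"
    and c_tail: "\<forall>s>0. \<forall>y::real^'d. y \<noteq> 0 \<longrightarrow> (\<forall>t>0.
          measure (gaussian_vec s) {z. \<bar>z \<bullet> y\<bar> \<ge> t} \<le> exp (1 - c * t\<^sup>2 / (s\<^sup>2 * (norm y)\<^sup>2)))"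
    and M: "prob_space M"
    and sigma_pos: "\<sigma> > 0"
    and x1_rv: "x1 \<in> borel_measurable M" and x2_rv: "x2 \<in> borel_measurable M"
    and x1_norm: "\<forall>\<omega>\<in>space M. norm (x1 \<omega>) = 1"
    and x2_norm: "\<forall>\<omega>\<in>space M. norm (x2 \<omega>) = 1"
    and e1_gauss: "distributed M lborel e1 (\<lambda>z. ennreal (gauss_density \<sigma> z))"
    and e2_gauss: "distributed M lborel e2 (\<lambda>z. ennreal (gauss_density \<sigma> z))"
    and indep: "prob_space.indep_sets M (\<lambda>i::nat. if i = 0 then {e1 -` A \<inter> space M | A. A \<in> sets borel}
                        else if i = 1 then {e2 -` A \<inter> space M | A. A \<in> sets borel}
                        else {(\<lambda>\<omega>. (x1 \<omega>, x2 \<omega>)) -` A \<inter> space M | A. A \<in> sets borel}) {0, 1, 2}"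
    and p: "0 \<le> p" "p \<le> 1"
    and delta_pos: "\<delta> > 0"
  shows "(measure M {\<omega>\<in>space M. x1 \<omega> \<bullet> x2 \<omega> > v} \<ge> p \<longrightarrow>
            measure M {\<omega>\<in>space M. (x1 \<omega> + e1 \<omega>) \<bullet> (x2 \<omega> + e2 \<omega>) > v - 3 * \<delta>}
              \<ge> p - exp (1 - c * \<delta>\<^sup>2 / \<sigma>\<^sup>2) - real CARD('d) * \<sigma> ^ 4 / (2 * \<delta>\<^sup>2))
       \<and> (measure M {\<omega>\<in>space M. x1 \<omega> \<bullet> x2 \<omega> < v} \<ge> p \<longrightarrow>
            measure M {\<omega>\<in>space M. (x1 \<omega> + e1 \<omega>) \<bullet> (x2 \<omega> + e2 \<omega>) < v + 3 * \<delta>}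
              \<ge> p - exp (1 - c * \<delta>\<^sup>2 / \<sigma>\<^sup>2) - real CARD('d) * \<sigma> ^ 4 / (2 * \<delta>\<^sup>2))"
proof -
  interpret gaussian_noise_model M x1 x2 e1 e2 \<sigma>
    using M sigma_pos x1_rv x2_rv e1_gauss e2_gauss indep
    by (simp add: gaussian_noise_model_def gaussian_noise_model_axioms_def)
  have tail: "measure (gaussian_vec (sqrt 2 * \<sigma>)) {z. sqrt 2 * \<delta> \<le> \<bar>z \<bullet> a\<bar>} \<le> exp (1 - c * \<delta>\<^sup>2 / \<sigma>\<^sup>2)"
    if "norm a = 1" for a :: "real^'d"
  proof -
    have "a \<noteq> 0" using that by auto
    then show ?thesis
      using c_tail[rule_format, of "sqrt 2 * \<sigma>" a "sqrt 2 * \<delta>"] sigma_pos delta_pos that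
      by (simp add: power_mult_distrib)
  qed
  define deviation where "deviation = prob {\<omega>\<in>space M.
    3 * \<delta> \<le> \<bar>(x1 \<omega> + e1 \<omega>) \<bullet> (x2 \<omega> + e2 \<omega>) - x1 \<omega> \<bullet> x2 \<omega>\<bar>}"
  have deviation: "deviation \<le> exp (1 - c * \<delta>\<^sup>2 / \<sigma>\<^sup>2) + real CARD('d) * \<sigma> ^ 4 / (2 * \<delta>\<^sup>2)"
    unfolding deviation_def by (rule prob_noisy_inner_deviation[OF x1_norm x2_norm tail delta_pos])
  have above: "v - 3 * \<delta> < b \<or> 3 * \<delta> \<le> \<bar>b - a\<bar>" if "v < a" for a b :: real
    using that by (auto simp: abs_if)
  have below: "b < v + 3 * \<delta> \<or> 3 * \<delta> \<le> \<bar>b - a\<bar>" if "a < v" for a b :: real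
    using that by (auto simp: abs_if)
  have gt: "prob {\<omega>\<in>space M. x1 \<omega> \<bullet> x2 \<omega> > v}
      \<le> prob {\<omega>\<in>space M. (x1 \<omega> + e1 \<omega>) \<bullet> (x2 \<omega> + e2 \<omega>) > v - 3 * \<delta>} + deviation"
    unfolding deviation_def by (rule prob_le_prob_add) (measurable, measurable, erule above)
  have lt: "prob {\<omega>\<in>space M. x1 \<omega> \<bullet> x2 \<omega> < v}
      \<le> prob {\<omega>\<in>space M. (x1 \<omega> + e1 \<omega>) \<bullet> (x2 \<omega> + e2 \<omega>) < v + 3 * \<delta>} + deviation"
    unfolding deviation_def by (rule prob_le_prob_add) (measurable, measurable, erule below)
  have "p - exp (1 - c * \<delta>\<^sup>2 / \<sigma>\<^sup>2) - real CARD('d) * \<sigma> ^ 4 / (2 * \<delta>\<^sup>2) \<le> Q"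
    if "P \<le> Q + deviation" and "p \<le> P" for P Q
    using that deviation by linarith
  then show ?thesis using gt lt by blast
qed

end
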